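(* Let $A\in\mathbb{R}^{n\times n}$ and $B\in\mathbb{R}^{n\times m}$ define the discrete-time system $x^+=Ax+Bu$. Let $\mathrm{S}\in\mathbb{R}^{n_s\times n}$ be such that $\mathcal{S}:=\{x\in\mathbb{R}^n:\mathrm{S}x\le \mathbf{1}\}$ is a C-set, and let $\mathrm{U}\in\mathbb{R}^{n_u\times m}$ be such that $\mathcal{U}:=\{u\in\mathbb{R}^m:\mathrm{U}u\le\mathbf{1}\}$ (a polyhedral convex set containing the origin in its interior). Let $u_d(0),\dots,u_d(T-1)$ be an input sequence and $x_d(0),\dots,x_d(T)$ the corresponding states with $x_d(k+1)=Ax_d(k)+Bu_d(k)$, and set $U_{0,T}:=[u_d(0)\ \cdots\ u_d(T-1)]$, $X_{0,T}:=[x_d(0)\ \cdots\ x_d(T-1)]$, $X_{1,T}:=[x_d(1)\ \cdots\ x_d(T)]$. If there exist $\lambda\in\mathbb{R}$, $G_K\in\mathbb{R}^{T\times n}$ and $P\in\mathbb{R}^{n_s\times n_s}$ with $P\ge0$ solving the problem of minimizing $\lambda$ subject to $0\le\lambda<1$, $P\mathbf{1}\le\lambda\mathbf{1}$, $P\mathrm{S}=\mathrm{S}X_{1,T}G_K$, $\mathrm{U}U_{0,T}G_Ks\le\mathbf{1}$ for all vertices $s$ of $\mathcal{S}$, and $I_n=X_{0,T}G_K$, then the controller $K=U_{0,T}G_K$ ensures that $\mathcal{S}$ is $\lambda$-contractive for $x^+=(A+BK)x$ and admissible for $\mathcal{U}$.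
   Context: $\mathbf{1}$ denotes the vector of all ones of appropriate dimension; inequalities between vectors/matrices are entrywise. A C-set is a convex compact subset of $\mathbb{R}^n$ containing the origin as an interior point. For $\mu\ge0$, $\mu\mathcal{S}:=\{\mu x:x\in\mathcal{S}\}$. A C-set $\mathcal{S}$ is $\lambda$-contractive for $x^+=Fx$ (with $\lambda\in[0,1)$) if for each $x\in\mathcal{S}$, $\inf\{\lambda'\ge0: Fx\in\lambda'\mathcal{S}\}\le\lambda$. $\mathcal{S}$ is admissible for $\mathcal{U}$ (with gain $K$) if $Kx\in\mathcal{U}$ for every $x\in\mathcal{S}$. *)

theory Defs
  imports "HOL-Analysis.Analysis"
begin

text \<open>All-ones vector of appropriate dimension; inequalities on vectors/matrices
  (type real^'a, real^'a^'b) are entrywise (library order less_eq_vec).\<close>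
definition ones :: "real^'a" where "ones = vec 1"

definition C_set :: "(real^'n) set \<Rightarrow> bool" where
  "C_set S \<longleftrightarrow> convex S \<and> compact S \<and> 0 \<in> interior S"

definition scaled_set :: "real \<Rightarrow> (real^'n) set \<Rightarrow> (real^'n) set" where
  "scaled_set \<mu> S = (\<lambda>x. \<mu> *\<^sub>R x) ` S"

definition contractive :: "real \<Rightarrow> (real^'n) set \<Rightarrow> (real^'n \<Rightarrow> real^'n) \<Rightarrow> bool" where
  "contractive lam S F \<longleftrightarrow> C_set S \<and> 0 \<le> lam \<and> lam < 1 \<and>
     (\<forall>x\<in>S. Inf {lam'. lam' \<ge> 0 \<and> F x \<in> scaled_set lam' S} \<le> lam)"

definition admissible :: "(real^'n) set \<Rightarrow> (real^'m) set \<Rightarrow> real^'n^'m \<Rightarrow> bool" where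
  "admissible S U K \<longleftrightarrow> (\<forall>x\<in>S. K *v x \<in> U)"

text \<open>Data matrices; columns indexed by the finite type 't, column j corresponding
  to time idx j, where idx enumerates 't as 0..T-1.\<close>
definition U0T :: "(nat \<Rightarrow> real^'m) \<Rightarrow> ('t \<Rightarrow> nat) \<Rightarrow> real^'t^'m" where
  "U0T ud idx = (\<chi> i j. ud (idx j) $ i)"
definition X0T :: "(nat \<Rightarrow> real^'n) \<Rightarrow> ('t \<Rightarrow> nat) \<Rightarrow> real^'t^'n" where
  "X0T xd idx = (\<chi> i j. xd (idx j) $ i)"
definition X1T :: "(nat \<Rightarrow> real^'n) \<Rightarrow> ('t \<Rightarrow> nat) \<Rightarrow> real^'t^'n" where
  "X1T xd idx = (\<chi> i j. xd (Suc (idx j)) $ i)"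

definition feasible ::
  "real^'n^'s \<Rightarrow> real^'m^'u \<Rightarrow> real^'t^'m \<Rightarrow> real^'t^'n \<Rightarrow> real^'t^'n
   \<Rightarrow> real \<Rightarrow> real^'n^'t \<Rightarrow> real^'s^'s \<Rightarrow> bool" where
  "feasible Sm Um U0 X0 X1 lam GK P \<longleftrightarrow>
     0 \<le> P \<and> 0 \<le> lam \<and> lam < 1 \<and> P *v ones \<le> lam *\<^sub>R ones \<and>
     P ** Sm = Sm ** X1 ** GK \<and>
     (\<forall>s. s extreme_point_of {x. Sm *v x \<le> ones} \<longrightarrow> Um *v ((U0 ** GK) *v s) \<le> ones) \<and>
     mat 1 = X0 ** GK"

end

theory Submission
  imports Defs
begin

(* The data matrices satisfy X1 = A X0 + B U0, so the constraint X0 GK = I turns X1 GK into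
   the closed-loop matrix A + B K. The equation P S = S (A + B K) with P >= 0 and P 1 <= lam 1
   then maps S x <= 1 to S (A + B K) x <= lam 1, i.e. the next state lies in lam S.
   Admissibility only has to be checked at the extreme points of S, by the Krein-Milman
   theorem. *)

lemma nonneg_matrix_vector_mult_mono:
  fixes P :: "real^'n^'m"
  assumes "0 \<le> P" "a \<le> b"
  shows "P *v a \<le> P *v b"
proof -
  have "(\<Sum>j\<in>UNIV. P$i$j * a$j) \<le> (\<Sum>j\<in>UNIV. P$i$j * b$j)" for i
  proof (rule sum_mono)
    fix j
    have "0 \<le> P$i$j" "a$j \<le> b$j"
      using assms by (simp_all add: less_eq_vec_def)
    then show "P$i$j * a$j \<le> P$i$j * b$j"
      by (rule mult_left_mono[rotated])
  qed
  then show ?thesis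
    by (simp add: less_eq_vec_def matrix_vector_mult_def)
qed

lemma matrix_add_rdistrib: "((A::'a::semiring_1^'n^'m) + B) ** (C::'a^'p^'n) = A ** C + B ** C"
  by (vector matrix_matrix_mult_def sum.distrib[symmetric] field_simps)

lemma convex_polyhedron: "convex {x::real^'n. M *v x \<le> c}"
proof -
  have "{x. M *v x \<le> c} = (\<lambda>x. M *v x) -` {..c}"
    by auto
  then show ?thesis
    by (simp add: convex_linear_vimage is_interval_convex)
qed

lemma mem_scaled_polyhedron:
  fixes M :: "real^'n^'s"
  assumes "M *v y \<le> \<mu> *\<^sub>R c" "\<mu> > 0"
  shows "y \<in> scaled_set \<mu> {x. M *v x \<le> c}"
proof -
  have "M *v (inverse \<mu> *\<^sub>R y) \<le> c"
    using assms by (simp add: matrix_vector_mult_scaleR less_eq_vec_def field_simps)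
  moreover have "y = \<mu> *\<^sub>R (inverse \<mu> *\<^sub>R y)"
    using assms by simp
  ultimately show ?thesis
    unfolding scaled_set_def by blast
qed

lemma Inf_scale_polyhedron_le:
  fixes M :: "real^'n^'s"
  assumes "0 \<le> c" "0 \<le> lam" "M *v y \<le> lam *\<^sub>R c"
  shows "Inf {lam'. lam' \<ge> 0 \<and> y \<in> scaled_set lam' {x. M *v x \<le> c}} \<le> lam"
    (is "Inf ?L \<le> lam")
proof -
  have "\<mu> \<in> ?L" if "lam < \<mu>" for \<mu>
  proof -
    have "lam *\<^sub>R c \<le> \<mu> *\<^sub>R c"
      using that \<open>0 \<le> c\<close> by (simp add: scaleR_right_mono)
    then have "M *v y \<le> \<mu> *\<^sub>R c"
      using assms(3) by order
    then show ?thesis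
      using that \<open>0 \<le> lam\<close> by (simp add: mem_scaled_polyhedron)
  qed
  then have "{lam<..} \<subseteq> ?L"
    by auto
  moreover have "bdd_below ?L"
    by (rule bdd_belowI[of _ 0]) auto
  ultimately have "Inf ?L \<le> Inf {lam<..}"
    by (intro cInf_superset_mono) auto
  then show ?thesis
    by simp
qed

lemma contractive_polyhedron:
  fixes M :: "real^'n^'s" and F :: "real^'n^'n" and P :: "real^'s^'s"
  assumes "C_set {x. M *v x \<le> ones}" "0 \<le> lam" "lam < 1"
    and "0 \<le> P" "P *v ones \<le> lam *\<^sub>R ones" "M ** F = P ** M"
  shows "contractive lam {x. M *v x \<le> ones} (\<lambda>x. F *v x)"
proof -
  have "Inf {lam'. lam' \<ge> 0 \<and> F *v x \<in> scaled_set lam' {x. M *v x \<le> ones}} \<le> lam"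
    if "M *v x \<le> ones" for x
  proof (rule Inf_scale_polyhedron_le)
    have "M *v (F *v x) = P *v (M *v x)"
      by (simp add: matrix_vector_mul_assoc \<open>M ** F = P ** M\<close>)
    also have "\<dots> \<le> P *v ones"
      using \<open>0 \<le> P\<close> that by (rule nonneg_matrix_vector_mult_mono)
    finally show "M *v (F *v x) \<le> lam *\<^sub>R ones"
      using \<open>P *v ones \<le> lam *\<^sub>R ones\<close> by order
  qed (simp_all add: ones_def less_eq_vec_def \<open>0 \<le> lam\<close>)
  with assms(1-3) show ?thesis
    by (simp add: contractive_def)
qed

lemma subset_convex_if_extreme_points:
  fixes S :: "'a::euclidean_space set"
  assumes "compact S" "convex S" "convex C" "\<And>x. x extreme_point_of S \<Longrightarrow> x \<in> C"
  shows "S \<subseteq> C"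
proof -
  have "convex hull {x. x extreme_point_of S} \<subseteq> C"
    using assms(3,4) by (intro hull_minimal) auto
  then show ?thesis
    using Krein_Milman_Minkowski[OF assms(1,2)] by simp
qed

lemma admissible_if_extreme_points:
  fixes S :: "(real^'n) set" and K :: "real^'n^'m"
  assumes "compact S" "convex S" "convex U" "\<And>s. s extreme_point_of S \<Longrightarrow> K *v s \<in> U"
  shows "admissible S U K"
proof -
  have "convex ((\<lambda>x. K *v x) -` U)"
    using \<open>convex U\<close> by (simp add: convex_linear_vimage)
  then have "S \<subseteq> (\<lambda>x. K *v x) -` U"
    using assms by (intro subset_convex_if_extreme_points) auto
  then show ?thesis
    by (auto simp: admissible_def)
qed

lemma X1T_eq_dynamics:
  assumes "\<And>j. xd (Suc (idx j)) = A *v xd (idx j) + B *v ud (idx j)"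
  shows "X1T xd idx = A ** X0T xd idx + B ** U0T ud idx"
  using assms
  by (simp add: X1T_def X0T_def U0T_def vec_eq_iff matrix_matrix_mult_def matrix_vector_mult_def)

lemma closed_loop_from_data:
  fixes A :: "'a::comm_ring_1^'n^'n"
  assumes "X1 = A ** X0 + B ** U0" "X0 ** G = mat 1"
  shows "X1 ** G = A + B ** (U0 ** G)"
  by (simp add: assms matrix_add_rdistrib flip: matrix_mul_assoc)

theorem corollary1:
  fixes A :: "real^'n^'n" and B :: "real^'m^'n"
    and Sm :: "real^'n^'s" and Um :: "real^'m^'u"
    and xd :: "nat \<Rightarrow> real^'n" and ud :: "nat \<Rightarrow> real^'m"
    and idx :: "'t::finite \<Rightarrow> nat"
    and lam :: real and GK :: "real^'n^'t" and P :: "real^'s^'s"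
  assumes Cset: "C_set {x. Sm *v x \<le> ones}"
    and idx: "bij_betw idx UNIV {..<CARD('t)}"
    and dyn: "\<And>k. k < CARD('t) \<Longrightarrow> xd (Suc k) = A *v xd k + B *v ud k"
    and feas: "feasible Sm Um (U0T ud idx) (X0T xd idx) (X1T xd idx) lam GK P"
    and opt: "\<And>lam' GK' P'. feasible Sm Um (U0T ud idx) (X0T xd idx) (X1T xd idx) lam' GK' P'
                 \<Longrightarrow> lam \<le> lam'"
  shows "contractive lam {x. Sm *v x \<le> ones} (\<lambda>x. (A + B ** (U0T ud idx ** GK)) *v x)
       \<and> admissible {x. Sm *v x \<le> ones} {u. Um *v u \<le> ones} (U0T ud idx ** GK)"
proof
  have bounds: "0 \<le> P" "0 \<le> lam" "lam < 1" "P *v ones \<le> lam *\<^sub>R ones"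
    and PS: "P ** Sm = Sm ** X1T xd idx ** GK"
    and vertices: "\<And>s. s extreme_point_of {x. Sm *v x \<le> ones}
                     \<Longrightarrow> Um *v ((U0T ud idx ** GK) *v s) \<le> ones"
    and X0G: "mat 1 = X0T xd idx ** GK"
    using feas by (auto simp: feasible_def)
  have "idx j < CARD('t)" for j
    using idx by (auto simp: bij_betw_def)
  then have "X1T xd idx = A ** X0T xd idx + B ** U0T ud idx"
    using dyn by (intro X1T_eq_dynamics) simp
  then have "X1T xd idx ** GK = A + B ** (U0T ud idx ** GK)"
    using X0G by (intro closed_loop_from_data) auto
  then have "Sm ** (A + B ** (U0T ud idx ** GK)) = P ** Sm"
    by (simp add: PS flip: matrix_mul_assoc)
  with Cset bounds
  show "contractive lam {x. Sm *v x \<le> ones} (\<lambda>x. (A + B ** (U0T ud idx ** GK)) *v x)"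
    by (intro contractive_polyhedron)
  show "admissible {x. Sm *v x \<le> ones} {u. Um *v u \<le> ones} (U0T ud idx ** GK)"
    using Cset vertices
    by (intro admissible_if_extreme_points convex_polyhedron) (auto simp: C_set_def)
qed

end
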